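(* Let $n\in\{1,2,3\}$, let $\Omega\subset\mathbb{R}^n$ be a bounded domain with smooth boundary and outward unit normal $\nu$, and let $T>0$. Let $u=u(x,t)$ satisfy $$u_t=\Delta u+f(x,t)\ \text{ in }\Omega\times]0,T[,\qquad u(\cdot,0)=0\ \text{ in }\Omega,$$ with enough regularity for the boundary traces and Green's formula below to make sense. Assume: (A.1) there is $T_0\in[0,T[$ such that $f(x,t)=\chi_D(x,t)\rho(x,t)$, where $D\subset\overline\Omega\times[T_0,T]$ is Lebesgue measurable and $\rho$ is essentially bounded on $D$; (A.2) there exist positive numbers $\delta<T-T_0$, $C_1$, $C_2$ and $p\in[0,\infty[$ such that, with $D(s)=D\cap(\mathbb{R}^n\times\{T_0+s\})$, the $n$-dimensional Lebesgue measure satisfies $|D(s)|\ge C_1 s^p$ for almost all $s\in[0,\delta]$, and either $\rho(x,t)\ge C_2$ for almost all $(x,t)\in D\cap(\mathbb{R}^n\times[T_0,T_0+\delta])$, or $-\rho(x,t)\ge C_2$ for almost all such $(x,t)$. For $\omega\in S^{n-1}$, $s\in\mathbb{R}$ and $\tau>0$ define $$I_\omega(\tau;s)=e^{\tau s}\int_0^T\int_{\partial\Omega}\Big(\frac{\partial v}{\partial\nu}u-\frac{\partial u}{\partial\nu}v\Big)\,dS\,dt,\qquad v(x,t)=e^{\sqrt{\tau}\,x\cdot\omega-\tau t}.$$ Then for every $\omega\in S^{n-1}$, $$\lim_{\tau\to\infty}\frac{\log|I_\omega(\tau;0)|}{\tau}=-T_0.$$ Moreover, if $s<T_0$ then $\lim_{\tau\to\infty}|I_\omega(\tau;s)|=0$,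 and if $s>T_0$ then $\lim_{\tau\to\infty}|I_\omega(\tau;s)|=\infty$.
   Context: $\chi_D$ denotes the indicator function of $D$. *)

theory Defs
  imports "HOL-Analysis.Analysis"
begin

definition dd :: "'a::real_normed_vector \<Rightarrow> ('a \<Rightarrow> real) \<Rightarrow> 'a \<Rightarrow> real" where
  "dd e f z = deriv (\<lambda>s. f (z + s *\<^sub>R e)) 0"

fun Ck :: "nat \<Rightarrow> 'a::euclidean_space set \<Rightarrow> ('a \<Rightarrow> real) \<Rightarrow> bool" where
  "Ck 0 U f = continuous_on U f"
| "Ck (Suc k) U f =
     (continuous_on U f \<and>
      (\<forall>i\<in>Basis. \<forall>x\<in>U. (\<lambda>s. f (x + s *\<^sub>R i)) differentiable (at 0)) \<and>
      (\<forall>i\<in>Basis. Ck k U (dd i f)))"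

definition smooth_on :: "'a::euclidean_space set \<Rightarrow> ('a \<Rightarrow> real) \<Rightarrow> bool" where
  "smooth_on U f \<longleftrightarrow> (\<forall>k. Ck k U f)"

definition grad :: "('a::euclidean_space \<Rightarrow> real) \<Rightarrow> 'a \<Rightarrow> 'a" where
  "grad f x = (\<Sum>i\<in>Basis. dd i f x *\<^sub>R i)"

definition lap_x :: "('a::euclidean_space \<times> real \<Rightarrow> real) \<Rightarrow> 'a \<times> real \<Rightarrow> real" where
  "lap_x \<phi> z = (\<Sum>i\<in>Basis. dd (i, 0) (dd (i, 0) \<phi>) z)"

definition d_t :: "('a::euclidean_space \<times> real \<Rightarrow> real) \<Rightarrow> 'a \<times> real \<Rightarrow> real" where
  "d_t \<phi> z = dd (0, 1) \<phi> z"

definition local_defining_fn :: "'a::euclidean_space set \<Rightarrow> 'a set \<Rightarrow> ('a \<Rightarrow> real) \<Rightarrow> bool" where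
  "local_defining_fn \<Omega> U \<psi> \<longleftrightarrow>
     open U \<and> smooth_on U \<psi> \<and> (\<forall>y\<in>U. grad \<psi> y \<noteq> 0) \<and> \<Omega> \<inter> U = {y\<in>U. \<psi> y < 0}"

definition bounded_smooth_domain :: "'a::euclidean_space set \<Rightarrow> bool" where
  "bounded_smooth_domain \<Omega> \<longleftrightarrow> open \<Omega> \<and> connected \<Omega> \<and> \<Omega> \<noteq> {} \<and> bounded \<Omega> \<and>
     (\<forall>x\<in>frontier \<Omega>. \<exists>U \<psi>. x \<in> U \<and> local_defining_fn \<Omega> U \<psi>)"

definition outward_unit_normal :: "'a::euclidean_space set \<Rightarrow> ('a \<Rightarrow> 'a) \<Rightarrow> bool" where
  "outward_unit_normal \<Omega> \<nu> \<longleftrightarrow>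
     (\<forall>x\<in>frontier \<Omega>. \<exists>U \<psi>. x \<in> U \<and> local_defining_fn \<Omega> U \<psi> \<and>
        \<nu> x = (1 / norm (grad \<psi> x)) *\<^sub>R grad \<psi> x)"

definition hausdorff_pre :: "nat \<Rightarrow> real \<Rightarrow> 'a::euclidean_space set \<Rightarrow> ennreal" where
  "hausdorff_pre k \<delta> A =
     (INF C \<in> {C :: nat \<Rightarrow> 'a set. A \<subseteq> (\<Union>i. C i) \<and> (\<forall>i. bounded (C i) \<and> diameter (C i) \<le> \<delta>)}.
        (\<Sum>i. if C i = {} then 0 else ennreal (unit_ball_vol (real k) * (diameter (C i) / 2) ^ k)))"

definition hausdorff_outer :: "nat \<Rightarrow> 'a::euclidean_space set \<Rightarrow> ennreal" where
  "hausdorff_outer k A = (SUP \<delta> \<in> {0<..}. hausdorff_pre k \<delta> A)"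

definition hausdorff_measure :: "nat \<Rightarrow> 'a::euclidean_space measure" where
  "hausdorff_measure k = measure_of UNIV (sets borel) (hausdorff_outer k)"

definition surface_measure :: "'a::euclidean_space measure" where
  "surface_measure = hausdorff_measure (DIM('a) - 1)"

definition heat_v :: "real \<Rightarrow> 'a::euclidean_space \<Rightarrow> 'a \<times> real \<Rightarrow> real" where
  "heat_v \<tau> \<omega> z = exp (sqrt \<tau> * (fst z \<bullet> \<omega>) - \<tau> * snd z)"

text \<open>I_omega(tau;s); g0 is the boundary trace of u, g1 the trace of its outward normal derivative.\<close>
definition heat_I :: "'a::euclidean_space set \<Rightarrow> ('a \<Rightarrow> 'a) \<Rightarrow> ('a \<times> real \<Rightarrow> real) \<Rightarrow> ('a \<times> real \<Rightarrow> real)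
    \<Rightarrow> real \<Rightarrow> 'a \<Rightarrow> real \<Rightarrow> real \<Rightarrow> real" where
  "heat_I \<Omega> \<nu> g0 g1 T \<omega> s \<tau> = exp (\<tau> * s) *
     (LINT z : frontier \<Omega> \<times> {0<..<T} | (surface_measure \<Otimes>\<^sub>M lborel).
        dd (\<nu> (fst z), 0) (heat_v \<tau> \<omega>) z * g0 z - g1 z * heat_v \<tau> \<omega> z)"

end

(*
  For tau >= 0 and norm omega = 1, v(x,t) = exp (sqrt tau * (x . omega) - tau * t) solves the
  backward heat equation v_t + Lap v = 0, so the weak form of the equation tested with v turns
  I_omega(tau;0) into G(tau) = int_D rho v - int_Omega u(.,T) v(.,T).  If R bounds |x . omega| on
  Omega, then t >= T0 on D gives |G(tau)| = O(exp (R sqrt tau - tau T0)).  Conversely rho has a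
  fixed sign on D near t = T0, and D has positive measure in every layer T0 <= t <= T0 + eta,
  because its time sections do and the smooth boundary of Omega is a null set; hence
  |G(tau)| >= c exp (- R sqrt tau - tau (T0 + eta)) - O(exp (R sqrt tau - tau (T0 + delta))).
  So ln |G(tau)| / tau -> - T0, and the claims for s <> T0 follow from
  I_omega(tau;s) = exp (tau s) I_omega(tau;0).
*)
theory Submission
  imports Defs "HOL-Real_Asymp.Real_Asymp"
begin

section \<open>Exponential solutions of the backward heat equation\<close>

definition heat_phase :: "real \<Rightarrow> 'a::euclidean_space \<Rightarrow> 'a \<times> real \<Rightarrow> real" where
  "heat_phase \<tau> \<omega> z = sqrt \<tau> * (fst z \<bullet> \<omega>) - \<tau> * snd z"

lemma heat_v_translate: "heat_v \<tau> \<omega> (z + s *\<^sub>R e) = heat_v \<tau> \<omega> z * exp (s * heat_phase \<tau> \<omega> e)"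
  unfolding heat_v_def heat_phase_def
  by (simp add: inner_add_left algebra_simps flip: exp_add)

lemma heat_v_line_has_derivative:
  "((\<lambda>s. c * heat_v \<tau> \<omega> (z + s *\<^sub>R e)) has_real_derivative c * heat_phase \<tau> \<omega> e * heat_v \<tau> \<omega> z) (at 0)"
proof -
  have "((\<lambda>s. c * heat_v \<tau> \<omega> z * exp (s * heat_phase \<tau> \<omega> e)) has_real_derivative
          c * heat_v \<tau> \<omega> z * (exp (0 * heat_phase \<tau> \<omega> e) * heat_phase \<tau> \<omega> e)) (at 0)"
    by (intro derivative_eq_intros) auto
  then show ?thesis by (simp add: heat_v_translate mult_ac)
qed

lemma dd_heat_v: "dd e (\<lambda>z. c * heat_v \<tau> \<omega> z) = (\<lambda>z. c * heat_phase \<tau> \<omega> e * heat_v \<tau> \<omega> z)"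
  unfolding dd_def by (rule ext, rule DERIV_imp_deriv, rule heat_v_line_has_derivative)

lemma continuous_on_heat_v: "continuous_on S (heat_v \<tau> \<omega>)"
  unfolding heat_v_def by (intro continuous_intros)

lemma Ck_heat_v: "Ck k UNIV (\<lambda>z. c * heat_v \<tau> \<omega> z)"
proof (induction k arbitrary: c)
  case 0
  show ?case by (simp add: continuous_intros continuous_on_heat_v)
next
  case (Suc k)
  have "(\<lambda>s. c * heat_v \<tau> \<omega> (x + s *\<^sub>R i)) differentiable (at 0)" for x i
    using heat_v_line_has_derivative real_differentiable_def by blast
  then show ?case
    using Suc by (simp add: dd_heat_v continuous_intros continuous_on_heat_v)
qed

lemma smooth_on_heat_v: "smooth_on UNIV (heat_v \<tau> \<omega>)"
  using Ck_heat_v[of _ 1] unfolding smooth_on_def by auto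

lemma heat_v_backward_heat_equation:
  fixes \<omega> :: "'a::euclidean_space"
  assumes "\<tau> \<ge> 0" "norm \<omega> = 1"
  shows "d_t (heat_v \<tau> \<omega>) z + lap_x (heat_v \<tau> \<omega>) z = 0"
proof -
  have dd_v: "dd e (heat_v \<tau> \<omega>) = (\<lambda>z. heat_phase \<tau> \<omega> e * heat_v \<tau> \<omega> z)" for e
    using dd_heat_v[of e 1] by simp
  have "(\<Sum>i\<in>Basis. (i \<bullet> \<omega>)\<^sup>2) = \<omega> \<bullet> \<omega>"
    by (simp add: euclidean_inner[of \<omega> \<omega>] power2_eq_square inner_commute)
  then have unit: "(\<Sum>i\<in>Basis. (i \<bullet> \<omega>)\<^sup>2) = 1"
    using assms(2) by (simp add: dot_square_norm)
  have "lap_x (heat_v \<tau> \<omega>) z = (\<Sum>i\<in>Basis. \<tau> * (i \<bullet> \<omega>)\<^sup>2 * heat_v \<tau> \<omega> z)"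
    unfolding lap_x_def dd_v dd_heat_v using assms(1)
    by (intro sum.cong) (auto simp: heat_phase_def power2_eq_square algebra_simps)
  also have "\<dots> = \<tau> * heat_v \<tau> \<omega> z"
    by (simp add: unit mult.assoc flip: sum_distrib_right sum_distrib_left)
  finally have "lap_x (heat_v \<tau> \<omega>) z = \<tau> * heat_v \<tau> \<omega> z" .
  then show ?thesis
    unfolding d_t_def dd_v heat_phase_def by simp
qed

lemma heat_v_pos: "heat_v \<tau> \<omega> z > 0"
  unfolding heat_v_def by simp

lemma heat_v_le:
  assumes "\<bar>fst z \<bullet> \<omega>\<bar> \<le> R" "\<tau> \<ge> 0" "t \<le> snd z"
  shows "heat_v \<tau> \<omega> z \<le> exp (sqrt \<tau> * R - \<tau> * t)"
proof -
  have "sqrt \<tau> * (fst z \<bullet> \<omega>) \<le> sqrt \<tau> * R" "\<tau> * t \<le> \<tau> * snd z"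
    using assms by (auto intro: mult_left_mono)
  then show ?thesis unfolding heat_v_def by simp
qed

lemma heat_v_ge:
  assumes "\<bar>fst z \<bullet> \<omega>\<bar> \<le> R" "\<tau> \<ge> 0" "snd z \<le> t"
  shows "exp (- (sqrt \<tau> * R) - \<tau> * t) \<le> heat_v \<tau> \<omega> z"
proof -
  have "sqrt \<tau> * (- R) \<le> sqrt \<tau> * (fst z \<bullet> \<omega>)"
    using assms by (intro mult_left_mono) auto
  moreover have "\<tau> * snd z \<le> \<tau> * t"
    using assms by (intro mult_left_mono) auto
  ultimately show ?thesis unfolding heat_v_def by simp
qed

lemma abs_mult_heat_v_le:
  assumes "\<bar>a\<bar> \<le> M" "\<bar>fst z \<bullet> \<omega>\<bar> \<le> R" "\<tau> \<ge> 0" "t \<le> snd z"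
  shows "\<bar>a * heat_v \<tau> \<omega> z\<bar> \<le> M * exp (sqrt \<tau> * R - \<tau> * t)"
  using assms heat_v_pos[of \<tau> \<omega> z] heat_v_le[of z \<omega> R \<tau> t]
  by (simp add: abs_mult mult_mono)

lemma mult_heat_v_ge:
  assumes "C \<le> a" "0 \<le> C" "\<bar>fst z \<bullet> \<omega>\<bar> \<le> R" "\<tau> \<ge> 0" "snd z \<le> t"
  shows "C * exp (- (sqrt \<tau> * R) - \<tau> * t) \<le> a * heat_v \<tau> \<omega> z"
  using assms heat_v_pos[of \<tau> \<omega> z] heat_v_ge[of z \<omega> R \<tau> t]
  by (simp add: mult_mono)

lemma heat_v_measurable: "heat_v \<tau> \<omega> \<in> borel_measurable lebesgue"
  by (intro measurable_completion)
    (simp add: measurable_lborel2 borel_measurable_continuous_onI continuous_on_heat_v)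

section \<open>Smooth boundaries are null sets\<close>

lemma translates_disjoint_if_meets_lines_once:
  fixes S :: "'a::real_vector set"
  assumes once: "\<And>x t. x \<in> S \<Longrightarrow> x + t *\<^sub>R e \<in> S \<Longrightarrow> t = 0" and "a \<noteq> b"
  shows "(+) (a *\<^sub>R e) ` S \<inter> (+) (b *\<^sub>R e) ` S = {}"
proof (rule ccontr)
  assume "(+) (a *\<^sub>R e) ` S \<inter> (+) (b *\<^sub>R e) ` S \<noteq> {}"
  then obtain x y where "x \<in> S" "y \<in> S" "a *\<^sub>R e + x = b *\<^sub>R e + y"
    by auto
  then have "a - b = 0"
    using once[of x "a - b"] by (simp add: algebra_simps)
  then show False
    using \<open>a \<noteq> b\<close> by simp
qed

lemma measure_mult_le_if_meets_lines_once:
  fixes S :: "'a::euclidean_space set" and e :: 'a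
  assumes S: "S \<in> lmeasurable" and R: "\<And>x. x \<in> S \<Longrightarrow> norm x \<le> R"
    and once: "\<And>x t. x \<in> S \<Longrightarrow> x + t *\<^sub>R e \<in> S \<Longrightarrow> t = 0"
  shows "real N * measure lebesgue S \<le> measure lebesgue (cball (0::'a) (R + norm e))"
proof -
  define A where "A k = (+) ((real k / real N) *\<^sub>R e) ` S" for k :: nat
  have A: "A k \<in> lmeasurable" for k
    unfolding A_def by (rule measurable_translation[OF S])
  have disj: "disjoint_family_on A {..<N}"
  proof (clarsimp simp: disjoint_family_on_def)
    fix k l assume "k < N" "l < N" "k \<noteq> l"
    then have "real k / real N \<noteq> real l / real N"
      by (simp add: field_simps)
    then show "A k \<inter> A l = {}"
      unfolding A_def by (intro translates_disjoint_if_meets_lines_once) (use once in auto)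
  qed
  have "real N * measure lebesgue S = (\<Sum>k<N. measure lebesgue (A k))"
    by (simp add: A_def measure_translation)
  also have "\<dots> = measure lebesgue (\<Union>k<N. A k)"
  proof (rule measure_finite_Union[symmetric])
    show "A ` {..<N} \<subseteq> sets lebesgue"
      using A fmeasurableD by blast
    show "emeasure lebesgue (A k) \<noteq> \<infinity>" for k
      using A fmeasurableD2 by (metis infinity_ennreal_def)
  qed (use disj in auto)
  also have "\<dots> \<le> measure lebesgue (cball (0::'a) (R + norm e))"
  proof (rule measure_mono_fmeasurable)
    show "(\<Union>k<N. A k) \<subseteq> cball 0 (R + norm e)"
    proof clarify
      fix k x assume "k < N" "x \<in> A k"
      then obtain y where y: "y \<in> S" "x = (real k / real N) *\<^sub>R e + y"
        unfolding A_def by auto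
      have "norm ((real k / real N) *\<^sub>R e) \<le> norm e"
        using \<open>k < N\<close> by (simp add: field_simps mult_right_mono)
      then show "x \<in> cball 0 (R + norm e)"
        using y R[OF y(1)] norm_triangle_ineq[of "(real k / real N) *\<^sub>R e" y] by simp
    qed
  qed (use A in auto)
  finally show ?thesis .
qed

lemma bounded_null_if_meets_lines_once:
  fixes S :: "'a::euclidean_space set" and e :: 'a
  assumes S: "S \<in> sets lebesgue" "bounded S"
    and once: "\<And>x t. x \<in> S \<Longrightarrow> x + t *\<^sub>R e \<in> S \<Longrightarrow> t = 0"
  shows "S \<in> null_sets lebesgue"
proof -
  have Sm: "S \<in> lmeasurable"
    using S bounded_set_imp_lmeasurable by blast
  obtain R where R: "\<And>x. x \<in> S \<Longrightarrow> norm x \<le> R"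
    using S(2) bounded_iff by blast
  have "measure lebesgue S = 0"
  proof (rule ccontr)
    assume "measure lebesgue S \<noteq> 0"
    then have pos: "measure lebesgue S > 0"
      using measure_nonneg le_less by metis
    obtain N :: nat where "N > measure lebesgue (cball (0::'a) (R + norm e)) / measure lebesgue S"
      using reals_Archimedean2 by blast
    moreover have "real N * measure lebesgue S \<le> measure lebesgue (cball (0::'a) (R + norm e))"
      by (rule measure_mult_le_if_meets_lines_once[OF Sm]) (use R once in auto)
    ultimately show False
      using pos by (simp add: field_simps)
  qed
  then show ?thesis
    using Sm by (simp add: fmeasurableD emeasure_eq_measure2 null_setsI)
qed

lemma line_derivative_nonzero_zero_unique:
  fixes f :: "'a::real_normed_vector \<Rightarrow> real"
  assumes B: "convex B"
    and deriv: "\<And>y. y \<in> B \<Longrightarrow> ((\<lambda>s. f (y + s *\<^sub>R e)) has_real_derivative f' y) (at 0)"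
    and nonzero: "\<And>y. y \<in> B \<Longrightarrow> f' y \<noteq> 0"
    and x: "x \<in> B" "x + t *\<^sub>R e \<in> B" "f x = 0" "f (x + t *\<^sub>R e) = 0"
  shows "t = 0"
proof (rule ccontr)
  assume "t \<noteq> 0"
  then consider "t > 0" | "t < 0" by linarith
  then obtain a b where ab: "a < b" "{a, b} = {0, t}" by (metis insert_commute)
  define \<phi> where "\<phi> s = f (x + s *\<^sub>R e)" for s
  have seg: "x + s *\<^sub>R e \<in> B" if "s \<in> {a..b}" for s
  proof -
    have "0 \<le> s / t" "s / t \<le> 1"
      using that ab \<open>t \<noteq> 0\<close> by (auto simp: doubleton_eq_iff field_split_simps)
    moreover have "x + s *\<^sub>R e = (1 - s / t) *\<^sub>R x + (s / t) *\<^sub>R (x + t *\<^sub>R e)"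
      using \<open>t \<noteq> 0\<close> by (simp add: algebra_simps)
    ultimately show ?thesis
      using convexD[OF B x(1,2), of "1 - s / t" "s / t"] by simp
  qed
  have \<phi>': "(\<phi> has_real_derivative f' (x + s *\<^sub>R e)) (at s)" if "s \<in> {a..b}" for s
  proof -
    have "(\<lambda>h. f (x + s *\<^sub>R e + h *\<^sub>R e)) = (\<lambda>h. \<phi> (h + s))"
      by (auto simp: \<phi>_def algebra_simps)
    then show ?thesis
      using deriv[OF seg[OF that]] DERIV_shift[of \<phi> _ 0 s] by simp
  qed
  have "continuous_on {a..b} \<phi>"
    using \<phi>' by (meson DERIV_isCont continuous_at_imp_continuous_on)
  moreover have "\<phi> a = \<phi> b"
    using ab x by (auto simp: \<phi>_def doubleton_eq_iff)
  moreover have "\<phi> differentiable (at s)" if "a < s" "s < b" for s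
    using \<phi>'[of s] that real_differentiable_def by auto
  ultimately obtain z where z: "a < z" "z < b" "(\<phi> has_real_derivative 0) (at z)"
    using Rolle[OF ab(1)] by blast
  then have "f' (x + z *\<^sub>R e) = 0"
    using DERIV_unique[OF \<phi>'[of z]] by simp
  then show False
    using nonzero[OF seg[of z]] z by simp
qed

lemma local_defining_fn_frontier_zero:
  fixes \<Omega> U :: "'a::euclidean_space set"
  assumes "open \<Omega>" and loc: "local_defining_fn \<Omega> U \<psi>" and y: "y \<in> frontier \<Omega>" "y \<in> U"
  shows "\<psi> y = 0"
proof -
  have U: "open U" and "continuous_on U \<psi>" and \<Omega>U: "\<Omega> \<inter> U = {y\<in>U. \<psi> y < 0}"
    using loc by (auto simp: local_defining_fn_def smooth_on_def dest: spec[of _ 0])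
  then obtain C where C: "closed C" "U \<inter> \<psi> -` {..0} = U \<inter> C"
    using continuous_closedin_preimage[of U \<psi> "{..0}"] by (auto simp: closedin_closed)
  have "y \<in> closure (\<Omega> \<inter> U)"
    using open_Int_closure_subset[OF U, of \<Omega>] y by (auto simp: frontier_def Int_commute)
  moreover have "closure (\<Omega> \<inter> U) \<subseteq> C"
    using \<Omega>U C by (intro closure_minimal) auto
  ultimately have "\<psi> y \<le> 0"
    using C(2) y(2) by auto
  moreover have "y \<notin> \<Omega>"
    using y \<open>open \<Omega>\<close> by (simp add: frontier_def interior_open)
  ultimately show ?thesis
    using \<Omega>U y(2) by force
qed

lemma frontier_locally_null:
  fixes \<Omega> U :: "'a::euclidean_space set"
  assumes "open \<Omega>" and loc: "local_defining_fn \<Omega> U \<psi>" and x0: "x0 \<in> U"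
  shows "\<exists>r>0. frontier \<Omega> \<inter> ball x0 r \<in> null_sets lebesgue"
proof -
  have U: "open U" and "Ck 1 U \<psi>" and "grad \<psi> x0 \<noteq> 0"
    using loc x0 unfolding local_defining_fn_def smooth_on_def by auto
  then have differentiable: "\<And>i x. i \<in> Basis \<Longrightarrow> x \<in> U \<Longrightarrow> (\<lambda>s. \<psi> (x + s *\<^sub>R i)) differentiable (at 0)"
    and continuous: "\<And>i. i \<in> Basis \<Longrightarrow> continuous_on U (dd i \<psi>)"
    by auto
  obtain i where i: "i \<in> Basis" "dd i \<psi> x0 \<noteq> 0"
    using \<open>grad \<psi> x0 \<noteq> 0\<close> unfolding grad_def by (metis (no_types, lifting) scaleR_zero_left sum.neutral)
  have "open (U \<inter> dd i \<psi> -` (-{0}))"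
    using continuous_open_preimage[OF continuous[OF i(1)] U] by auto
  then obtain r where r: "r > 0" "ball x0 r \<subseteq> U \<inter> dd i \<psi> -` (-{0})"
    using x0 i open_contains_ball by blast
  have "frontier \<Omega> \<inter> ball x0 r \<in> null_sets lebesgue"
  proof (rule bounded_null_if_meets_lines_once)
    fix x t assume x: "x \<in> frontier \<Omega> \<inter> ball x0 r" "x + t *\<^sub>R i \<in> frontier \<Omega> \<inter> ball x0 r"
    have zero: "\<psi> y = 0" if "y \<in> frontier \<Omega> \<inter> ball x0 r" for y
      using local_defining_fn_frontier_zero[OF \<open>open \<Omega>\<close> loc] that r(2) by blast
    show "t = 0"
    proof (rule line_derivative_nonzero_zero_unique[where B="ball x0 r" and f=\<psi> and f'="dd i \<psi>"])
      show "((\<lambda>s. \<psi> (y + s *\<^sub>R i)) has_real_derivative dd i \<psi> y) (at 0)" if "y \<in> ball x0 r" for y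
        using differentiable[OF i(1)] that r(2) unfolding dd_def
        by (auto simp: DERIV_deriv_iff_real_differentiable)
      show "dd i \<psi> y \<noteq> 0" if "y \<in> ball x0 r" for y
        using that r(2) by blast
    qed (use x zero in auto)
  qed auto
  then show ?thesis
    using r(1) by blast
qed

lemma frontier_null_if_bounded_smooth_domain:
  fixes \<Omega> :: "'a::euclidean_space set"
  assumes "bounded_smooth_domain \<Omega>"
  shows "frontier \<Omega> \<in> null_sets lebesgue"
proof -
  have "open \<Omega>" "compact (frontier \<Omega>)"
    and "\<forall>x\<in>frontier \<Omega>. \<exists>U \<psi>. x \<in> U \<and> local_defining_fn \<Omega> U \<psi>"
    using assms compact_frontier_bounded unfolding bounded_smooth_domain_def by auto
  then obtain r where r: "\<And>x. x \<in> frontier \<Omega> \<Longrightarrow> r x > 0 \<and> frontier \<Omega> \<inter> ball x (r x) \<in> null_sets lebesgue"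
    using frontier_locally_null by metis
  then obtain C where C: "C \<subseteq> frontier \<Omega>" "finite C" "frontier \<Omega> \<subseteq> (\<Union>c\<in>C. ball c (r c))"
    using compactE_image[OF \<open>compact (frontier \<Omega>)\<close>, of "frontier \<Omega>" "\<lambda>x. ball x (r x)"] by force
  then have "frontier \<Omega> = (\<Union>c\<in>C. frontier \<Omega> \<inter> ball c (r c))"
    by blast
  also have "\<dots> \<in> null_sets lebesgue"
    using C r by (intro null_sets.finite_UN) auto
  finally show ?thesis .
qed

section \<open>Null sets in space-time\<close>

lemma sets_lebesgue_snd_le: "{z :: 'a::euclidean_space \<times> real. snd z \<le> c} \<in> sets lebesgue"
  by (intro sets_completionI_sets) (simp add: borel_closed closed_Collect_le continuous_intros)

lemma lmeasurable_Times_greaterThanLessThan: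
  fixes \<Omega> :: "'a::euclidean_space set" and a b :: real
  assumes "open \<Omega>" "bounded \<Omega>"
  shows "\<Omega> \<times> {a<..<b} \<in> lmeasurable"
  using assms by (intro bounded_set_imp_lmeasurable bounded_Times sets_completionI_sets)
    (auto simp: borel_open open_Times)

lemma AE_sections_null:
  fixes N :: "('a::euclidean_space \<times> real) set"
  assumes "N \<in> null_sets lebesgue"
  shows "AE t in lborel. {x. (x, t) \<in> N} \<in> null_sets (lebesgue :: 'a measure)"
proof -
  obtain N' where N': "N' \<in> null_sets (lborel \<Otimes>\<^sub>M lborel)" "N \<subseteq> N'"
    using null_sets_completion_iff2[THEN iffD1, OF assms] by (auto simp: lborel_prod)
  then have "(\<integral>\<^sup>+t. emeasure lborel ((\<lambda>x. (x, t)) -` N') \<partial>lborel) = 0"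
    using lborel_pair.emeasure_pair_measure_alt2[OF null_setsD2[OF N'(1)]] null_setsD1[OF N'(1)]
    by simp
  then have "AE t in lborel. emeasure lborel ((\<lambda>x. (x, t)) -` N') = 0"
    using N'(1) by (subst (asm) nn_integral_0_iff_AE) (auto intro: lborel_pair.measurable_emeasure_Pair2)
  then show ?thesis
  proof eventually_elim
    case (elim t)
    then have "(\<lambda>x. (x, t)) -` N' \<in> null_sets lborel"
      using N'(1) by (auto intro: null_setsI sets_Pair2)
    moreover have "{x. (x, t) \<in> N} \<subseteq> (\<lambda>x. (x, t)) -` N'"
      using N'(2) by auto
    ultimately show ?case
      by (metis null_sets_completionI null_sets_completion_subset)
  qed
qed

lemma null_sets_Times_lebesgue:
  fixes A :: "'a::euclidean_space set" and B :: "real set"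
  assumes "A \<in> null_sets lebesgue"
  shows "A \<times> B \<in> null_sets (lebesgue :: ('a \<times> real) measure)"
proof -
  obtain A' where A': "A' \<in> null_sets lborel" "A \<subseteq> A'"
    using null_sets_completion_iff2[THEN iffD1, OF assms] by blast
  then have "A' \<times> UNIV \<in> null_sets (lborel :: ('a \<times> real) measure)"
    using lborel.times_in_null_sets1[OF A'(1), of UNIV] by (simp add: lborel_prod)
  moreover have "A \<times> B \<subseteq> A' \<times> UNIV"
    using A'(2) by auto
  ultimately show ?thesis
    by (metis null_sets_completionI null_sets_completion_subset)
qed

lemma AE_lborel_translate:
  fixes c :: real
  assumes "AE t in lborel. P t"
  shows "AE s in lborel. P (c + s)"
proof -
  have "AE t in distr lborel borel ((+) c). P t"
    unfolding lborel_distr_plus using assms .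
  then show ?thesis
    by (rule AE_distrD[rotated]) simp
qed

lemma AE_sections_null_if_layer_null:
  fixes \<Omega> :: "'a::euclidean_space set" and D :: "('a \<times> real) set"
  assumes \<Omega>: "open \<Omega>" "frontier \<Omega> \<in> null_sets lebesgue" and D: "D \<subseteq> closure \<Omega> \<times> UNIV"
    and null: "\<Omega> \<times> {0<..<T} \<inter> D \<inter> {z. snd z \<le> T0 + \<eta>} \<in> null_sets lebesgue"
    and "0 \<le> T0" "T0 + \<eta> < T"
  shows "AE s in lborel. s \<in> {0<..\<eta>} \<longrightarrow> {x. (x, T0 + s) \<in> D} \<in> null_sets lebesgue"
proof -
  let ?N = "\<Omega> \<times> {0<..<T} \<inter> D \<inter> {z. snd z \<le> T0 + \<eta>} \<union> frontier \<Omega> \<times> UNIV"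
  have "?N \<in> null_sets lebesgue"
    using null \<Omega>(2) null_sets_Times_lebesgue by blast
  then have "AE s in lborel. {x. (x, T0 + s) \<in> ?N} \<in> null_sets lebesgue"
    by (rule AE_lborel_translate[OF AE_sections_null])
  then show ?thesis
  proof eventually_elim
    case (elim s)
    have "{x. (x, T0 + s) \<in> D} \<subseteq> {x. (x, T0 + s) \<in> ?N}" if "s \<in> {0<..\<eta>}"
      using D that assms(5,6) \<Omega>(1) by (auto simp: frontier_def interior_open)
    then show ?case
      using elim by (metis null_sets_completion_subset)
  qed
qed

lemma measure_initial_layer_pos:
  fixes \<Omega> :: "'a::euclidean_space set" and D :: "('a \<times> real) set"
  assumes \<Omega>: "open \<Omega>" "bounded \<Omega>" "frontier \<Omega> \<in> null_sets lebesgue"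
    and D: "D \<in> sets lebesgue" "D \<subseteq> closure \<Omega> \<times> UNIV"
    and times: "0 \<le> T0" "0 < \<eta>" "T0 + \<eta> < T"
    and sections: "AE s in lborel. s \<in> {0<..\<eta>} \<longrightarrow> emeasure lebesgue {x. (x, T0 + s) \<in> D} \<noteq> 0"
  shows "measure lebesgue (\<Omega> \<times> {0<..<T} \<inter> D \<inter> {z. snd z \<le> T0 + \<eta>}) > 0"
proof -
  define E where "E = \<Omega> \<times> {0<..<T} \<inter> D \<inter> {z. snd z \<le> T0 + \<eta>}"
  have H: "\<Omega> \<times> {0<..<T} \<in> lmeasurable"
    using \<Omega>(1,2) by (rule lmeasurable_Times_greaterThanLessThan)
  have E: "E \<in> lmeasurable"
    unfolding E_def
    by (intro fmeasurableI2[OF H] sets.Int fmeasurableD[OF H] D(1) sets_lebesgue_snd_le) auto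
  have "E \<notin> null_sets lebesgue"
  proof
    assume "E \<in> null_sets lebesgue"
    then have "AE s in lborel. s \<in> {0<..\<eta>} \<longrightarrow> {x. (x, T0 + s) \<in> D} \<in> null_sets lebesgue"
      unfolding E_def using \<Omega>(1,3) D(2) times(1,3) by (intro AE_sections_null_if_layer_null)
    then have "AE s in lborel. s \<notin> {0<..\<eta>}"
      using sections by eventually_elim auto
    then have "{0<..\<eta>} \<in> null_sets lborel"
      by (subst AE_iff_null_sets) auto
    then show False
      using times(2) by auto
  qed
  then show ?thesis
    using E measure_nonneg[of lebesgue E]
    by (auto simp: E_def emeasure_eq_measure2 fmeasurableD null_setsI less_le)
qed

section \<open>Two-sided bounds for I\<close>

definition heat_I_interior ::
    "'a::euclidean_space set \<Rightarrow> ('a \<times> real \<Rightarrow> real) \<Rightarrow> real \<Rightarrow> ('a \<times> real) set \<Rightarrow> ('a \<times> real \<Rightarrow> real)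
      \<Rightarrow> 'a \<Rightarrow> real \<Rightarrow> real" where
  "heat_I_interior \<Omega> u T D \<rho> \<omega> \<tau> =
     (LINT z : \<Omega> \<times> {0<..<T} | lebesgue. indicator D z * \<rho> z * heat_v \<tau> \<omega> z)
     - (LINT x : \<Omega> | lebesgue. u (x, T) * heat_v \<tau> \<omega> (x, T))"

lemma heat_I_eq_heat_I_interior:
  fixes \<Omega> :: "'a::euclidean_space set" and \<omega> :: 'a
  assumes green: "(LINT x : \<Omega> | lebesgue. u (x, T) * heat_v \<tau> \<omega> (x, T))
        - (LINT z : \<Omega> \<times> {0<..<T} | lebesgue. u z * (d_t (heat_v \<tau> \<omega>) z + lap_x (heat_v \<tau> \<omega>) z))
        = (LINT z : \<Omega> \<times> {0<..<T} | lebesgue. indicator D z * \<rho> z * heat_v \<tau> \<omega> z)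
        + (LINT z : frontier \<Omega> \<times> {0<..<T} | (surface_measure \<Otimes>\<^sub>M lborel).
             g1 z * heat_v \<tau> \<omega> z - g0 z * dd (\<nu> (fst z), 0) (heat_v \<tau> \<omega>) z)"
    and "\<tau> \<ge> 0" "norm \<omega> = 1"
  shows "heat_I \<Omega> \<nu> g0 g1 T \<omega> s \<tau> = exp (\<tau> * s) * heat_I_interior \<Omega> u T D \<rho> \<omega> \<tau>"
proof -
  have "(LINT z : frontier \<Omega> \<times> {0<..<T} | (surface_measure \<Otimes>\<^sub>M lborel).
          dd (\<nu> (fst z), 0) (heat_v \<tau> \<omega>) z * g0 z - g1 z * heat_v \<tau> \<omega> z)
      = - (LINT z : frontier \<Omega> \<times> {0<..<T} | (surface_measure \<Otimes>\<^sub>M lborel).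
          g1 z * heat_v \<tau> \<omega> z - g0 z * dd (\<nu> (fst z), 0) (heat_v \<tau> \<omega>) z)"
    unfolding set_lebesgue_integral_def by (simp add: algebra_simps flip: integral_minus)
  then show ?thesis
    using green heat_v_backward_heat_equation[OF assms(2,3)] by (simp add: heat_I_def heat_I_interior_def)
qed

lemma source_integral_upper:
  fixes D :: "('a::euclidean_space \<times> real) set"
  assumes H: "H \<in> lmeasurable"
    and R: "\<And>z. z \<in> H \<Longrightarrow> \<bar>fst z \<bullet> \<omega>\<bar> \<le> R" and T0: "\<And>z. z \<in> H \<inter> D \<Longrightarrow> T0 \<le> snd z"
    and \<rho>: "AE z in lebesgue. z \<in> D \<longrightarrow> \<bar>\<rho> z\<bar> \<le> M" and "M \<ge> 0" "\<tau> \<ge> 0"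
  shows "\<bar>LINT z:H|lebesgue. indicator D z * \<rho> z * heat_v \<tau> \<omega> z\<bar>
           \<le> M * measure lebesgue H * exp (sqrt \<tau> * R - \<tau> * T0)"
proof -
  define d where "d = M * exp (sqrt \<tau> * R - \<tau> * T0)"
  let ?f = "\<lambda>z. indicator H z * (indicator D z * \<rho> z * heat_v \<tau> \<omega> z)"
  have "\<bar>integral\<^sup>L lebesgue ?f\<bar> \<le> (\<integral>z. norm (?f z) \<partial>lebesgue)"
    using integral_norm_bound[of lebesgue ?f] by simp
  also have "\<dots> \<le> integral\<^sup>L lebesgue (\<lambda>z. d * indicator H z)"
  proof (rule integral_mono_AE')
    show "integrable lebesgue (\<lambda>z. d * indicator H z)"
      using H by (intro integrable_mult_right integrable_real_indicator) (auto simp: fmeasurable_def)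
    show "AE z in lebesgue. 0 \<le> d * indicator H z"
      using \<open>M \<ge> 0\<close> by (simp add: d_def)
    show "AE z in lebesgue. norm (?f z) \<le> d * indicator H z"
      using \<rho>
    proof eventually_elim
      case (elim z)
      show ?case
      proof (cases "z \<in> H \<inter> D")
        case True
        then show ?thesis
          unfolding d_def using abs_mult_heat_v_le[of "\<rho> z" M z \<omega> R \<tau> T0] elim R T0 \<open>\<tau> \<ge> 0\<close>
          by (simp add: mult.assoc)
      qed (use \<open>M \<ge> 0\<close> in \<open>auto simp: d_def\<close>)
    qed
  qed
  also have "\<dots> = d * measure lebesgue H"
    by simp
  finally show ?thesis
    by (simp add: set_lebesgue_integral_def d_def mult_ac)
qed

lemma set_integrable_source:
  fixes D :: "('a::euclidean_space \<times> real) set"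
  assumes H: "H \<in> lmeasurable"
    and R: "\<And>z. z \<in> H \<Longrightarrow> \<bar>fst z \<bullet> \<omega>\<bar> \<le> R" and T0: "\<And>z. z \<in> H \<inter> D \<Longrightarrow> T0 \<le> snd z"
    and \<rho>_meas: "(\<lambda>z. indicator D z * \<rho> z) \<in> borel_measurable lebesgue"
    and \<rho>: "AE z in lebesgue. z \<in> D \<longrightarrow> \<bar>\<rho> z\<bar> \<le> M" and "M \<ge> 0" "\<tau> \<ge> 0"
  shows "set_integrable lebesgue H (\<lambda>z. indicator D z * \<rho> z * heat_v \<tau> \<omega> z)"
  unfolding set_integrable_def
proof (rule integrableI_bounded_set_indicator)
  show "(\<lambda>z. indicator D z * \<rho> z * heat_v \<tau> \<omega> z) \<in> borel_measurable lebesgue"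
    by (intro borel_measurable_times \<rho>_meas heat_v_measurable)
  show "AE z in lebesgue. z \<in> H \<longrightarrow> norm (indicator D z * \<rho> z * heat_v \<tau> \<omega> z) \<le> M * exp (sqrt \<tau> * R - \<tau> * T0)"
    using \<rho>
  proof eventually_elim
    case (elim z)
    show ?case
      using abs_mult_heat_v_le[of "\<rho> z" M z \<omega> R \<tau> T0] elim R T0 \<open>\<tau> \<ge> 0\<close> \<open>M \<ge> 0\<close>
      by (cases "z \<in> D") (auto simp: mult.assoc)
  qed
qed (use H in \<open>auto simp: fmeasurable_def\<close>)

lemma source_integrand_lower:
  assumes R: "z \<in> H \<Longrightarrow> \<bar>fst z \<bullet> \<omega>\<bar> \<le> R" and T0: "z \<in> H \<inter> D \<Longrightarrow> T0 \<le> snd z"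
    and \<rho>: "z \<in> D \<Longrightarrow> \<bar>\<rho> z\<bar> \<le> M" and \<rho>_pos: "z \<in> D \<and> snd z \<in> {T0..T0+\<delta>} \<Longrightarrow> C2 \<le> \<rho> z"
    and "M \<ge> 0" "C2 > 0" "\<tau> \<ge> 0" "\<eta> \<le> \<delta>"
  shows "C2 * exp (- (sqrt \<tau> * R) - \<tau> * (T0 + \<eta>)) * indicator (H \<inter> D \<inter> {z. snd z \<le> T0 + \<eta>}) z
           - M * exp (sqrt \<tau> * R - \<tau> * (T0 + \<delta>)) * indicator H z
         \<le> indicator H z * (indicator D z * \<rho> z * heat_v \<tau> \<omega> z)"
proof -
  have "0 \<le> M * exp (sqrt \<tau> * R - \<tau> * (T0 + \<delta>))"
    using \<open>M \<ge> 0\<close> by simp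
  consider "z \<notin> H \<inter> D" | "z \<in> H \<inter> D" "snd z \<le> T0 + \<delta>" | "z \<in> H \<inter> D" "T0 + \<delta> < snd z"
    by fastforce
  then show ?thesis
  proof cases
    case 1
    then show ?thesis
      using \<open>0 \<le> M * _\<close> by (auto simp: indicator_def)
  next
    case 2
    then have "C2 * exp (- (sqrt \<tau> * R) - \<tau> * (T0 + \<eta>)) * indicator {z. snd z \<le> T0 + \<eta>} z
        \<le> \<rho> z * heat_v \<tau> \<omega> z"
      using R T0 \<rho>_pos \<open>\<tau> \<ge> 0\<close> \<open>C2 > 0\<close> heat_v_pos[of \<tau> \<omega> z]
        mult_heat_v_ge[of C2 "\<rho> z" z \<omega> R \<tau> "T0 + \<eta>"]
      by (auto simp: indicator_def)
    then show ?thesis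
      using 2 \<open>0 \<le> M * _\<close> by (auto simp: indicator_def)
  next
    case 3
    then have "\<bar>\<rho> z * heat_v \<tau> \<omega> z\<bar> \<le> M * exp (sqrt \<tau> * R - \<tau> * (T0 + \<delta>))"
      using abs_mult_heat_v_le[of "\<rho> z" M z \<omega> R \<tau> "T0 + \<delta>"] R \<rho> \<open>\<tau> \<ge> 0\<close> by auto
    then show ?thesis
      using 3 \<open>\<eta> \<le> \<delta>\<close> by (auto simp: indicator_def)
  qed
qed

lemma source_integral_lower:
  fixes D :: "('a::euclidean_space \<times> real) set"
  assumes H: "H \<in> lmeasurable" and D: "D \<in> sets lebesgue"
    and R: "\<And>z. z \<in> H \<Longrightarrow> \<bar>fst z \<bullet> \<omega>\<bar> \<le> R" and T0: "\<And>z. z \<in> H \<inter> D \<Longrightarrow> T0 \<le> snd z"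
    and \<rho>_meas: "(\<lambda>z. indicator D z * \<rho> z) \<in> borel_measurable lebesgue"
    and \<rho>: "AE z in lebesgue. z \<in> D \<longrightarrow> \<bar>\<rho> z\<bar> \<le> M"
    and \<rho>_pos: "AE z in lebesgue. z \<in> D \<and> snd z \<in> {T0..T0+\<delta>} \<longrightarrow> C2 \<le> \<rho> z"
    and "M \<ge> 0" "C2 > 0" "\<tau> \<ge> 0" "\<eta> \<le> \<delta>"
  shows "C2 * measure lebesgue (H \<inter> D \<inter> {z. snd z \<le> T0 + \<eta>}) * exp (- (sqrt \<tau> * R) - \<tau> * (T0 + \<eta>))
           - M * measure lebesgue H * exp (sqrt \<tau> * R - \<tau> * (T0 + \<delta>))
         \<le> (LINT z:H|lebesgue. indicator D z * \<rho> z * heat_v \<tau> \<omega> z)"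
proof -
  define E where "E = H \<inter> D \<inter> {z. snd z \<le> T0 + \<eta>}"
  define c where "c = C2 * exp (- (sqrt \<tau> * R) - \<tau> * (T0 + \<eta>))"
  define d where "d = M * exp (sqrt \<tau> * R - \<tau> * (T0 + \<delta>))"
  have E: "E \<in> lmeasurable"
    unfolding E_def by (intro fmeasurableI2[OF H] sets.Int fmeasurableD[OF H] D sets_lebesgue_snd_le) auto
  have "AE z in lebesgue. c * indicator E z - d * indicator H z
      \<le> indicator H z * (indicator D z * \<rho> z * heat_v \<tau> \<omega> z)"
    using \<rho> \<rho>_pos unfolding c_def d_def E_def
    by eventually_elim (rule source_integrand_lower; use R T0 assms(8-) in auto)
  then have "integral\<^sup>L lebesgue (\<lambda>z. c * indicator E z - d * indicator H z)
      \<le> (LINT z:H|lebesgue. indicator D z * \<rho> z * heat_v \<tau> \<omega> z)"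
    unfolding set_lebesgue_integral_def
    using E H set_integrable_source[OF H R T0 \<rho>_meas \<rho> \<open>M \<ge> 0\<close> \<open>\<tau> \<ge> 0\<close>]
    by (intro integral_mono_AE) (auto simp: fmeasurable_def set_integrable_def)
  moreover have "integral\<^sup>L lebesgue (\<lambda>z. c * indicator E z - d * indicator H z)
      = c * measure lebesgue E - d * measure lebesgue H"
    using E H by (subst Bochner_Integration.integral_diff) (auto simp: fmeasurable_def)
  ultimately show ?thesis
    by (simp add: E_def c_def d_def mult_ac)
qed

lemma abs_source_integral_lower:
  fixes D :: "('a::euclidean_space \<times> real) set"
  assumes H: "H \<in> lmeasurable" and D: "D \<in> sets lebesgue"
    and R: "\<And>z. z \<in> H \<Longrightarrow> \<bar>fst z \<bullet> \<omega>\<bar> \<le> R" and T0: "\<And>z. z \<in> H \<inter> D \<Longrightarrow> T0 \<le> snd z"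
    and \<rho>_meas: "(\<lambda>z. indicator D z * \<rho> z) \<in> borel_measurable lebesgue"
    and \<rho>: "AE z in lebesgue. z \<in> D \<longrightarrow> \<bar>\<rho> z\<bar> \<le> M"
    and sign: "(AE z in lebesgue. z \<in> D \<and> snd z \<in> {T0..T0+\<delta>} \<longrightarrow> \<rho> z \<ge> C2)
             \<or> (AE z in lebesgue. z \<in> D \<and> snd z \<in> {T0..T0+\<delta>} \<longrightarrow> - \<rho> z \<ge> C2)"
    and "M \<ge> 0" "C2 > 0" "\<tau> \<ge> 0" "\<eta> \<le> \<delta>"
  shows "C2 * measure lebesgue (H \<inter> D \<inter> {z. snd z \<le> T0 + \<eta>}) * exp (- (sqrt \<tau> * R) - \<tau> * (T0 + \<eta>))
           - M * measure lebesgue H * exp (sqrt \<tau> * R - \<tau> * (T0 + \<delta>))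
         \<le> \<bar>LINT z:H|lebesgue. indicator D z * \<rho> z * heat_v \<tau> \<omega> z\<bar>"
    (is "?lower \<le> _")
  using sign
proof
  assume "AE z in lebesgue. z \<in> D \<and> snd z \<in> {T0..T0+\<delta>} \<longrightarrow> \<rho> z \<ge> C2"
  then have "?lower \<le> (LINT z:H|lebesgue. indicator D z * \<rho> z * heat_v \<tau> \<omega> z)"
    using H D R T0 \<rho>_meas \<rho> assms(8-) by (intro source_integral_lower)
  then show ?thesis
    by linarith
next
  assume "AE z in lebesgue. z \<in> D \<and> snd z \<in> {T0..T0+\<delta>} \<longrightarrow> - \<rho> z \<ge> C2"
  moreover have "(\<lambda>z. indicator D z * - \<rho> z) \<in> borel_measurable lebesgue"
    using borel_measurable_uminus[OF \<rho>_meas] by simp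
  moreover have "AE z in lebesgue. z \<in> D \<longrightarrow> \<bar>- \<rho> z\<bar> \<le> M"
    using \<rho> by simp
  ultimately have "?lower \<le> (LINT z:H|lebesgue. indicator D z * - \<rho> z * heat_v \<tau> \<omega> z)"
    using H D R T0 assms(8-) by (intro source_integral_lower)
  also have "\<dots> = - (LINT z:H|lebesgue. indicator D z * \<rho> z * heat_v \<tau> \<omega> z)"
    by (simp add: set_lebesgue_integral_def flip: integral_minus)
  finally show ?thesis
    by linarith
qed

lemma final_integral_upper:
  fixes \<Omega> :: "'a::euclidean_space set"
  assumes u: "set_integrable lebesgue \<Omega> (\<lambda>x. u (x, T))"
    and R: "\<And>x. x \<in> \<Omega> \<Longrightarrow> \<bar>x \<bullet> \<omega>\<bar> \<le> R" and "\<tau> \<ge> 0" "t \<le> T"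
  shows "\<bar>LINT x:\<Omega>|lebesgue. u (x, T) * heat_v \<tau> \<omega> (x, T)\<bar>
           \<le> (LINT x:\<Omega>|lebesgue. \<bar>u (x, T)\<bar>) * exp (sqrt \<tau> * R - \<tau> * t)"
proof -
  define e where "e = exp (sqrt \<tau> * R - \<tau> * t)"
  let ?f = "\<lambda>x. indicator \<Omega> x * (u (x, T) * heat_v \<tau> \<omega> (x, T))"
  have "\<bar>integral\<^sup>L lebesgue ?f\<bar> \<le> (\<integral>x. norm (?f x) \<partial>lebesgue)"
    using integral_norm_bound[of lebesgue ?f] by simp
  also have "\<dots> \<le> integral\<^sup>L lebesgue (\<lambda>x. e * (indicator \<Omega> x * \<bar>u (x, T)\<bar>))"
  proof (rule integral_mono_AE')
    show "integrable lebesgue (\<lambda>x. e * (indicator \<Omega> x * \<bar>u (x, T)\<bar>))"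
      using set_integrable_abs[OF u] by (simp add: set_integrable_def)
  next
    have "norm (?f x) \<le> e * (indicator \<Omega> x * \<bar>u (x, T)\<bar>)" for x
    proof (cases "x \<in> \<Omega>")
      case True
      then have "heat_v \<tau> \<omega> (x, T) \<le> e"
        unfolding e_def using R \<open>\<tau> \<ge> 0\<close> \<open>t \<le> T\<close> by (intro heat_v_le) auto
      then have "heat_v \<tau> \<omega> (x, T) * \<bar>u (x, T)\<bar> \<le> e * \<bar>u (x, T)\<bar>"
        by (simp add: mult_right_mono)
      then show ?thesis
        using True heat_v_pos[of \<tau> \<omega> "(x, T)"] by (simp add: abs_mult mult.commute)
    qed simp
    then show "AE x in lebesgue. norm (?f x) \<le> e * (indicator \<Omega> x * \<bar>u (x, T)\<bar>)"
      by simp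
  qed (simp add: e_def)
  also have "\<dots> = e * (LINT x:\<Omega>|lebesgue. \<bar>u (x, T)\<bar>)"
    by (simp add: set_lebesgue_integral_def)
  finally show ?thesis
    by (simp add: set_lebesgue_integral_def e_def mult.commute)
qed

lemma abs_heat_I_interior_upper:
  fixes \<Omega> :: "'a::euclidean_space set"
  assumes H: "\<Omega> \<times> {0<..<T} \<in> lmeasurable" and R: "\<And>x. x \<in> \<Omega> \<Longrightarrow> \<bar>x \<bullet> \<omega>\<bar> \<le> R"
    and D: "D \<subseteq> UNIV \<times> {T0..}" and \<rho>: "AE z in lebesgue. z \<in> D \<longrightarrow> \<bar>\<rho> z\<bar> \<le> M"
    and u: "set_integrable lebesgue \<Omega> (\<lambda>x. u (x, T))"
    and "M \<ge> 0" "\<tau> \<ge> 0" "T0 \<le> T"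
  shows "\<bar>heat_I_interior \<Omega> u T D \<rho> \<omega> \<tau>\<bar>
           \<le> (M * measure lebesgue (\<Omega> \<times> {0<..<T}) + (LINT x:\<Omega>|lebesgue. \<bar>u (x, T)\<bar>))
             * exp (sqrt \<tau> * R - \<tau> * T0)"
proof -
  have "\<bar>LINT z:\<Omega> \<times> {0<..<T}|lebesgue. indicator D z * \<rho> z * heat_v \<tau> \<omega> z\<bar>
      \<le> M * measure lebesgue (\<Omega> \<times> {0<..<T}) * exp (sqrt \<tau> * R - \<tau> * T0)"
    by (rule source_integral_upper[OF H _ _ \<rho> assms(6,7)]) (use R D in auto)
  moreover have "\<bar>LINT x:\<Omega>|lebesgue. u (x, T) * heat_v \<tau> \<omega> (x, T)\<bar>
      \<le> (LINT x:\<Omega>|lebesgue. \<bar>u (x, T)\<bar>) * exp (sqrt \<tau> * R - \<tau> * T0)"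
    using u R assms(7,8) by (rule final_integral_upper)
  ultimately show ?thesis
    unfolding heat_I_interior_def distrib_right using abs_triangle_ineq4 by (smt (verit))
qed

lemma abs_heat_I_interior_lower:
  fixes \<Omega> :: "'a::euclidean_space set" and D :: "('a \<times> real) set"
  assumes H: "\<Omega> \<times> {0<..<T} \<in> lmeasurable" and R: "\<And>x. x \<in> \<Omega> \<Longrightarrow> \<bar>x \<bullet> \<omega>\<bar> \<le> R"
    and D: "D \<in> sets lebesgue" "D \<subseteq> UNIV \<times> {T0..}"
    and \<rho>_meas: "(\<lambda>z. indicator D z * \<rho> z) \<in> borel_measurable lebesgue"
    and \<rho>: "AE z in lebesgue. z \<in> D \<longrightarrow> \<bar>\<rho> z\<bar> \<le> M"
    and sign: "(AE z in lebesgue. z \<in> D \<and> snd z \<in> {T0..T0+\<delta>} \<longrightarrow> \<rho> z \<ge> C2)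
             \<or> (AE z in lebesgue. z \<in> D \<and> snd z \<in> {T0..T0+\<delta>} \<longrightarrow> - \<rho> z \<ge> C2)"
    and u: "set_integrable lebesgue \<Omega> (\<lambda>x. u (x, T))"
    and "M \<ge> 0" "C2 > 0" "\<tau> \<ge> 0" "\<eta> \<le> \<delta>" "T0 + \<delta> \<le> T"
  shows "C2 * measure lebesgue (\<Omega> \<times> {0<..<T} \<inter> D \<inter> {z. snd z \<le> T0 + \<eta>}) * exp (- (sqrt \<tau> * R) - \<tau> * (T0 + \<eta>))
           - (M * measure lebesgue (\<Omega> \<times> {0<..<T}) + (LINT x:\<Omega>|lebesgue. \<bar>u (x, T)\<bar>))
             * exp (sqrt \<tau> * R - \<tau> * (T0 + \<delta>))
         \<le> \<bar>heat_I_interior \<Omega> u T D \<rho> \<omega> \<tau>\<bar>"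
proof -
  have "C2 * measure lebesgue (\<Omega> \<times> {0<..<T} \<inter> D \<inter> {z. snd z \<le> T0 + \<eta>}) * exp (- (sqrt \<tau> * R) - \<tau> * (T0 + \<eta>))
      - M * measure lebesgue (\<Omega> \<times> {0<..<T}) * exp (sqrt \<tau> * R - \<tau> * (T0 + \<delta>))
      \<le> \<bar>LINT z:\<Omega> \<times> {0<..<T}|lebesgue. indicator D z * \<rho> z * heat_v \<tau> \<omega> z\<bar>"
  proof (rule abs_source_integral_lower[OF H D(1) _ _ \<rho>_meas \<rho> sign \<open>M \<ge> 0\<close> \<open>C2 > 0\<close> \<open>\<tau> \<ge> 0\<close> \<open>\<eta> \<le> \<delta>\<close>])
    show "\<bar>fst z \<bullet> \<omega>\<bar> \<le> R" if "z \<in> \<Omega> \<times> {0<..<T}" for z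
      using R that by auto
    show "T0 \<le> snd z" if "z \<in> \<Omega> \<times> {0<..<T} \<inter> D" for z
      using D(2) that by auto
  qed
  moreover have "\<bar>LINT x:\<Omega>|lebesgue. u (x, T) * heat_v \<tau> \<omega> (x, T)\<bar>
      \<le> (LINT x:\<Omega>|lebesgue. \<bar>u (x, T)\<bar>) * exp (sqrt \<tau> * R - \<tau> * (T0 + \<delta>))"
    using u R \<open>\<tau> \<ge> 0\<close> \<open>T0 + \<delta> \<le> T\<close> by (rule final_integral_upper)
  ultimately show ?thesis
    unfolding heat_I_interior_def distrib_right using abs_triangle_ineq2 by (smt (verit))
qed

lemma eventually_abs_heat_I_interior_lower:
  fixes \<Omega> :: "'a::euclidean_space set" and D :: "('a \<times> real) set"
  assumes \<Omega>: "open \<Omega>" "bounded \<Omega>" "frontier \<Omega> \<in> null_sets lebesgue"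
    and R: "\<And>x. x \<in> \<Omega> \<Longrightarrow> \<bar>x \<bullet> \<omega>\<bar> \<le> R"
    and D: "D \<in> sets lebesgue" "D \<subseteq> closure \<Omega> \<times> {T0..}"
    and \<rho>_meas: "(\<lambda>z. indicator D z * \<rho> z) \<in> borel_measurable lebesgue"
    and \<rho>: "AE z in lebesgue. z \<in> D \<longrightarrow> \<bar>\<rho> z\<bar> \<le> M"
    and sign: "(AE z in lebesgue. z \<in> D \<and> snd z \<in> {T0..T0+\<delta>} \<longrightarrow> \<rho> z \<ge> C2)
             \<or> (AE z in lebesgue. z \<in> D \<and> snd z \<in> {T0..T0+\<delta>} \<longrightarrow> - \<rho> z \<ge> C2)"
    and sections: "AE s in lborel. s \<in> {0<..\<eta>} \<longrightarrow> emeasure lebesgue {x. (x, T0 + s) \<in> D} \<noteq> 0"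
    and u: "set_integrable lebesgue \<Omega> (\<lambda>x. u (x, T))"
    and "M \<ge> 0" "C2 > 0" "0 \<le> T0" "0 < \<eta>" "\<eta> < \<delta>" "T0 + \<delta> \<le> T"
  shows "\<exists>c>0. \<forall>\<^sub>F \<tau> in at_top. c * exp (- (sqrt \<tau> * R) - \<tau> * (T0 + \<eta>))
           - (M * measure lebesgue (\<Omega> \<times> {0<..<T}) + (LINT x:\<Omega>|lebesgue. \<bar>u (x, T)\<bar>))
             * exp (sqrt \<tau> * R - \<tau> * (T0 + \<delta>))
         \<le> \<bar>heat_I_interior \<Omega> u T D \<rho> \<omega> \<tau>\<bar>"
proof (intro exI conjI)
  have "D \<subseteq> closure \<Omega> \<times> UNIV" "T0 + \<eta> < T"
    using D(2) \<open>\<eta> < \<delta>\<close> \<open>T0 + \<delta> \<le> T\<close> by auto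
  then have "measure lebesgue (\<Omega> \<times> {0<..<T} \<inter> D \<inter> {z. snd z \<le> T0 + \<eta>}) > 0"
    using sections by (rule measure_initial_layer_pos[OF \<Omega> D(1) _ \<open>0 \<le> T0\<close> \<open>0 < \<eta>\<close>])
  then show "C2 * measure lebesgue (\<Omega> \<times> {0<..<T} \<inter> D \<inter> {z. snd z \<le> T0 + \<eta>}) > 0"
    using \<open>C2 > 0\<close> by simp
  have H: "\<Omega> \<times> {0<..<T} \<in> lmeasurable"
    using \<Omega>(1,2) by (rule lmeasurable_Times_greaterThanLessThan)
  have D_T0: "D \<subseteq> UNIV \<times> {T0..}"
    using D(2) by auto
  show "\<forall>\<^sub>F \<tau> in at_top.
      C2 * measure lebesgue (\<Omega> \<times> {0<..<T} \<inter> D \<inter> {z. snd z \<le> T0 + \<eta>}) * exp (- (sqrt \<tau> * R) - \<tau> * (T0 + \<eta>))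
        - (M * measure lebesgue (\<Omega> \<times> {0<..<T}) + (LINT x:\<Omega>|lebesgue. \<bar>u (x, T)\<bar>))
          * exp (sqrt \<tau> * R - \<tau> * (T0 + \<delta>))
      \<le> \<bar>heat_I_interior \<Omega> u T D \<rho> \<omega> \<tau>\<bar>"
    using eventually_ge_at_top[of 0]
    by eventually_elim (rule abs_heat_I_interior_lower[OF H R D(1) D_T0 \<rho>_meas \<rho> sign u \<open>M \<ge> 0\<close> \<open>C2 > 0\<close> _
          less_imp_le[OF \<open>\<eta> < \<delta>\<close>] \<open>T0 + \<delta> \<le> T\<close>])
qed

section \<open>Exponential rates\<close>

lemma eventually_exp_le_abs:
  fixes G :: "real \<Rightarrow> real"
  assumes "R \<ge> 0" "0 < \<epsilon>" "\<epsilon> < \<delta>"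
    and lower: "\<And>\<eta>. 0 < \<eta> \<Longrightarrow> \<eta> < \<delta> \<Longrightarrow> \<exists>c>0. \<forall>\<^sub>F \<tau> in at_top.
        c * exp (- (sqrt \<tau> * R) - \<tau> * (T0 + \<eta>)) - K * exp (sqrt \<tau> * R - \<tau> * (T0 + \<delta>)) \<le> \<bar>G \<tau>\<bar>"
  shows "\<forall>\<^sub>F \<tau> in at_top. exp (- \<tau> * (T0 + \<epsilon>)) \<le> \<bar>G \<tau>\<bar>"
proof -
  obtain c where "c > 0" and G: "\<forall>\<^sub>F \<tau> in at_top.
      c * exp (- (sqrt \<tau> * R) - \<tau> * (T0 + \<epsilon>/2)) - K * exp (sqrt \<tau> * R - \<tau> * (T0 + \<delta>)) \<le> \<bar>G \<tau>\<bar>"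
    using lower[of "\<epsilon>/2"] \<open>0 < \<epsilon>\<close> \<open>\<epsilon> < \<delta>\<close> by force
  \<comment> \<open>relative to exp (- \<tau> * (T0 + \<epsilon>)), the first term tends to infinity and the second to zero\<close>
  have "filterlim (\<lambda>\<tau>. c * exp (\<epsilon>/2 * \<tau> - R * sqrt \<tau>)) at_top at_top"
    using \<open>c > 0\<close> \<open>0 < \<epsilon>\<close> by real_asymp
  then have big: "\<forall>\<^sub>F \<tau> in at_top. 2 \<le> c * exp (\<epsilon>/2 * \<tau> - R * sqrt \<tau>)"
    by (simp add: filterlim_at_top)
  have "((\<lambda>\<tau>. \<bar>K\<bar> * exp (R * sqrt \<tau> - (\<delta> - \<epsilon>) * \<tau>)) \<longlongrightarrow> 0) at_top"
    using \<open>\<epsilon> < \<delta>\<close> by real_asymp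
  then have small: "\<forall>\<^sub>F \<tau> in at_top. \<bar>K\<bar> * exp (R * sqrt \<tau> - (\<delta> - \<epsilon>) * \<tau>) < 1"
    by (simp add: order_tendstoD(2))
  show ?thesis
    using G big small
  proof eventually_elim
    case (elim \<tau>)
    define E where "E = exp (- \<tau> * (T0 + \<epsilon>))"
    have "c * exp (- (sqrt \<tau> * R) - \<tau> * (T0 + \<epsilon>/2)) = E * (c * exp (\<epsilon>/2 * \<tau> - R * sqrt \<tau>))"
      "K * exp (sqrt \<tau> * R - \<tau> * (T0 + \<delta>)) = E * (K * exp (R * sqrt \<tau> - (\<delta> - \<epsilon>) * \<tau>))"
      unfolding E_def by (simp_all add: mult_ac flip: exp_add) (simp_all add: algebra_simps)
    moreover have "E * 2 \<le> E * (c * exp (\<epsilon>/2 * \<tau> - R * sqrt \<tau>))"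
      using elim(2) by (simp add: E_def)
    moreover have "K * exp (R * sqrt \<tau> - (\<delta> - \<epsilon>) * \<tau>) \<le> 1"
      using elim(3) abs_ge_self[of K] by (smt (verit) exp_gt_zero mult_right_mono)
    then have "E * (K * exp (R * sqrt \<tau> - (\<delta> - \<epsilon>) * \<tau>)) \<le> E"
      by (simp add: E_def)
    ultimately show ?case
      using elim(1) unfolding E_def by linarith
  qed
qed

lemma tendsto_ln_abs_div_at_top:
  fixes G :: "real \<Rightarrow> real"
  assumes "\<delta> > 0"
    and lower: "\<And>\<epsilon>. 0 < \<epsilon> \<Longrightarrow> \<epsilon> < \<delta> \<Longrightarrow> \<forall>\<^sub>F \<tau> in at_top. exp (- \<tau> * (T0 + \<epsilon>)) \<le> \<bar>G \<tau>\<bar>"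
    and upper: "\<forall>\<^sub>F \<tau> in at_top. \<bar>G \<tau>\<bar> \<le> K * exp (sqrt \<tau> * R - \<tau> * T0)"
  shows "((\<lambda>\<tau>. ln \<bar>G \<tau>\<bar> / \<tau>) \<longlongrightarrow> - T0) at_top"
proof (rule tendstoI)
  fix e :: real assume "e > 0"
  define \<epsilon> where "\<epsilon> = min (e/2) (\<delta>/2)"
  have \<epsilon>: "0 < \<epsilon>" "\<epsilon> < \<delta>" "\<epsilon> < e"
    using \<open>e > 0\<close> \<open>\<delta> > 0\<close> by (auto simp: \<epsilon>_def)
  define K' where "K' = max K 1"
  have "((\<lambda>\<tau>. (ln K' + R * sqrt \<tau>) / \<tau>) \<longlongrightarrow> 0) at_top"
    by real_asymp
  then have small: "\<forall>\<^sub>F \<tau> in at_top. (ln K' + R * sqrt \<tau>) / \<tau> < e"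
    using \<open>e > 0\<close> by (simp add: order_tendstoD(2))
  show "\<forall>\<^sub>F \<tau> in at_top. dist (ln \<bar>G \<tau>\<bar> / \<tau>) (- T0) < e"
    using lower[OF \<epsilon>(1,2)] upper small eventually_gt_at_top[of 0]
  proof eventually_elim
    case (elim \<tau>)
    have G: "\<bar>G \<tau>\<bar> > 0"
      using elim(1) by (meson exp_gt_zero less_le_trans)
    have "\<bar>G \<tau>\<bar> \<le> K' * exp (sqrt \<tau> * R - \<tau> * T0)"
      using elim(2) by (smt (verit) K'_def exp_gt_zero mult_right_mono)
    then have "ln \<bar>G \<tau>\<bar> \<le> ln (K' * exp (sqrt \<tau> * R - \<tau> * T0))"
      using G by (subst ln_le_cancel_iff) (auto simp: K'_def)
    also have "\<dots> = ln K' + (sqrt \<tau> * R - \<tau> * T0)"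
      by (subst ln_mult) (auto simp: K'_def)
    finally have "ln \<bar>G \<tau>\<bar> \<le> ln K' + (sqrt \<tau> * R - \<tau> * T0)" .
    then have "ln \<bar>G \<tau>\<bar> / \<tau> \<le> (ln K' + R * sqrt \<tau>) / \<tau> - T0"
      using elim(4) by (simp add: field_simps)
    moreover have "- \<tau> * (T0 + \<epsilon>) \<le> ln \<bar>G \<tau>\<bar>"
      using elim(1) G by (metis ln_exp ln_le_cancel_iff exp_gt_zero)
    then have "- (T0 + \<epsilon>) \<le> ln \<bar>G \<tau>\<bar> / \<tau>"
      using elim(4) by (simp add: field_simps)
    ultimately show ?case
      using elim(3) \<epsilon> by (simp add: dist_real_def abs_if)
  qed
qed

lemma tendsto_zero_if_exp_rate_upper:
  fixes F G :: "real \<Rightarrow> real"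
  assumes "s < T0"
    and FG: "\<forall>\<^sub>F \<tau> in at_top. F \<tau> = exp (\<tau> * s) * G \<tau>"
    and upper: "\<forall>\<^sub>F \<tau> in at_top. \<bar>G \<tau>\<bar> \<le> K * exp (sqrt \<tau> * R - \<tau> * T0)"
  shows "((\<lambda>\<tau>. \<bar>F \<tau>\<bar>) \<longlongrightarrow> 0) at_top"
proof (rule tendsto_sandwich[OF _ _ tendsto_const])
  have "((\<lambda>\<tau>. exp (R * sqrt \<tau> - (T0 - s) * \<tau>)) \<longlongrightarrow> 0) at_top"
    using \<open>s < T0\<close> by real_asymp
  then show "((\<lambda>\<tau>. K * exp (R * sqrt \<tau> - (T0 - s) * \<tau>)) \<longlongrightarrow> 0) at_top"
    by (rule tendsto_mult_right_zero)
  show "\<forall>\<^sub>F \<tau> in at_top. \<bar>F \<tau>\<bar> \<le> K * exp (R * sqrt \<tau> - (T0 - s) * \<tau>)"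
    using FG upper
  proof eventually_elim
    case (elim \<tau>)
    have "\<bar>F \<tau>\<bar> \<le> exp (\<tau> * s) * (K * exp (sqrt \<tau> * R - \<tau> * T0))"
      using elim by (simp add: abs_mult)
    also have "\<dots> = K * exp (R * sqrt \<tau> - (T0 - s) * \<tau>)"
      by (simp add: mult_ac flip: exp_add) (simp add: algebra_simps)
    finally show ?case .
  qed
qed simp

lemma filterlim_at_top_if_exp_rate_lower:
  fixes F G :: "real \<Rightarrow> real"
  assumes "T0 < s" "\<delta> > 0"
    and FG: "\<forall>\<^sub>F \<tau> in at_top. F \<tau> = exp (\<tau> * s) * G \<tau>"
    and lower: "\<And>\<epsilon>. 0 < \<epsilon> \<Longrightarrow> \<epsilon> < \<delta> \<Longrightarrow> \<forall>\<^sub>F \<tau> in at_top. exp (- \<tau> * (T0 + \<epsilon>)) \<le> \<bar>G \<tau>\<bar>"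
  shows "filterlim (\<lambda>\<tau>. \<bar>F \<tau>\<bar>) at_top at_top"
proof -
  define \<epsilon> where "\<epsilon> = min ((s - T0)/2) (\<delta>/2)"
  have \<epsilon>: "0 < \<epsilon>" "\<epsilon> < \<delta>" "\<epsilon> < s - T0"
    using \<open>T0 < s\<close> \<open>\<delta> > 0\<close> unfolding \<epsilon>_def by (simp_all add: min_def)
  have "filterlim (\<lambda>\<tau>. exp ((s - T0 - \<epsilon>) * \<tau>)) at_top at_top"
    using \<epsilon> by real_asymp
  moreover have "\<forall>\<^sub>F \<tau> in at_top. exp ((s - T0 - \<epsilon>) * \<tau>) \<le> \<bar>F \<tau>\<bar>"
    using FG lower[OF \<epsilon>(1,2)]
  proof eventually_elim
    case (elim \<tau>)
    have "exp ((s - T0 - \<epsilon>) * \<tau>) = exp (\<tau> * s) * exp (- \<tau> * (T0 + \<epsilon>))"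
      by (simp flip: exp_add) (simp add: algebra_simps)
    also have "\<dots> \<le> \<bar>F \<tau>\<bar>"
      using elim by (simp add: abs_mult)
    finally show ?case .
  qed
  ultimately show ?thesis
    by (rule filterlim_at_top_mono)
qed

lemma exponential_rate_limits:
  fixes G :: "real \<Rightarrow> real" and F :: "real \<Rightarrow> real \<Rightarrow> real"
  assumes "\<delta> > 0" "R \<ge> 0"
    and FG: "\<And>s. \<forall>\<^sub>F \<tau> in at_top. F s \<tau> = exp (\<tau> * s) * G \<tau>"
    and upper: "\<forall>\<^sub>F \<tau> in at_top. \<bar>G \<tau>\<bar> \<le> K * exp (sqrt \<tau> * R - \<tau> * T0)"
    and lower: "\<And>\<eta>. 0 < \<eta> \<Longrightarrow> \<eta> < \<delta> \<Longrightarrow> \<exists>c>0. \<forall>\<^sub>F \<tau> in at_top.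
        c * exp (- (sqrt \<tau> * R) - \<tau> * (T0 + \<eta>)) - K * exp (sqrt \<tau> * R - \<tau> * (T0 + \<delta>)) \<le> \<bar>G \<tau>\<bar>"
  shows "(\<forall>\<^sub>F \<tau> in at_top. F 0 \<tau> \<noteq> 0)
       \<and> ((\<lambda>\<tau>. ln \<bar>F 0 \<tau>\<bar> / \<tau>) \<longlongrightarrow> - T0) at_top
       \<and> (\<forall>s. s < T0 \<longrightarrow> ((\<lambda>\<tau>. \<bar>F s \<tau>\<bar>) \<longlongrightarrow> 0) at_top)
       \<and> (\<forall>s. s > T0 \<longrightarrow> filterlim (\<lambda>\<tau>. \<bar>F s \<tau>\<bar>) at_top at_top)"
proof (intro conjI allI impI)
  have lower_exp: "\<forall>\<^sub>F \<tau> in at_top. exp (- \<tau> * (T0 + \<epsilon>)) \<le> \<bar>G \<tau>\<bar>" if "0 < \<epsilon>" "\<epsilon> < \<delta>" for \<epsilon>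
    using eventually_exp_le_abs[OF \<open>R \<ge> 0\<close> that lower] by blast
  then show "filterlim (\<lambda>\<tau>. \<bar>F s \<tau>\<bar>) at_top at_top" if "s > T0" for s
    using that \<open>\<delta> > 0\<close> FG by (intro filterlim_at_top_if_exp_rate_lower)
  show "((\<lambda>\<tau>. \<bar>F s \<tau>\<bar>) \<longlongrightarrow> 0) at_top" if "s < T0" for s
    using that FG upper by (rule tendsto_zero_if_exp_rate_upper)
  have F0: "\<forall>\<^sub>F \<tau> in at_top. F 0 \<tau> = G \<tau>"
    using FG[of 0] by simp
  have "\<forall>\<^sub>F \<tau> in at_top. exp (- \<tau> * (T0 + \<delta>/2)) \<le> \<bar>G \<tau>\<bar>"
    using \<open>\<delta> > 0\<close> by (intro lower_exp) auto
  then show "\<forall>\<^sub>F \<tau> in at_top. F 0 \<tau> \<noteq> 0"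
    using F0 by eventually_elim (metis abs_zero exp_gt_zero not_le)
  have "((\<lambda>\<tau>. ln \<bar>G \<tau>\<bar> / \<tau>) \<longlongrightarrow> - T0) at_top"
    using \<open>\<delta> > 0\<close> lower_exp upper by (rule tendsto_ln_abs_div_at_top)
  moreover have "\<forall>\<^sub>F \<tau> in at_top. ln \<bar>G \<tau>\<bar> / \<tau> = ln \<bar>F 0 \<tau>\<bar> / \<tau>"
    using F0 by eventually_elim simp
  ultimately show "((\<lambda>\<tau>. ln \<bar>F 0 \<tau>\<bar> / \<tau>) \<longlongrightarrow> - T0) at_top"
    by (rule Lim_transform_eventually)
qed

theorem theorem2p1:
  fixes \<Omega> :: "(real^'n) set" and \<nu> :: "real^'n \<Rightarrow> real^'n"
    and u g0 g1 \<rho> :: "(real^'n) \<times> real \<Rightarrow> real" and D :: "((real^'n) \<times> real) set"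
    and T T0 \<delta> C1 C2 p :: real and \<omega> :: "real^'n"
  assumes dim: "CARD('n) \<in> {1, 2, 3}"
    and dom: "bounded_smooth_domain \<Omega>"
    and normal: "outward_unit_normal \<Omega> \<nu>"
    and T: "T > 0"
    \<comment> \<open>regularity (integrability) of u, u(.,T), and the boundary traces g0 = u, g1 = du/dnu\<close>
    and u_int: "set_integrable lebesgue (\<Omega> \<times> {0<..<T}) u"
    and uT_int: "set_integrable lebesgue \<Omega> (\<lambda>x. u (x, T))"
    and g0_int: "set_integrable (surface_measure \<Otimes>\<^sub>M lborel) (frontier \<Omega> \<times> {0<..<T}) g0"
    and g1_int: "set_integrable (surface_measure \<Otimes>\<^sub>M lborel) (frontier \<Omega> \<times> {0<..<T}) g1"
    \<comment> \<open>u_t = Laplace u + f in Omega x ]0,T[, u(.,0) = 0, with Green's formula (traces g0, g1)\<close>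
    and heat: "\<And>\<phi>. smooth_on UNIV \<phi> \<Longrightarrow>
        (LINT x : \<Omega> | lebesgue. u (x, T) * \<phi> (x, T))
        - (LINT z : \<Omega> \<times> {0<..<T} | lebesgue. u z * (d_t \<phi> z + lap_x \<phi> z))
        = (LINT z : \<Omega> \<times> {0<..<T} | lebesgue. indicator D z * \<rho> z * \<phi> z)
        + (LINT z : frontier \<Omega> \<times> {0<..<T} | (surface_measure \<Otimes>\<^sub>M lborel).
             g1 z * \<phi> z - g0 z * dd (\<nu> (fst z), 0) \<phi> z)"
    \<comment> \<open>(A.1)\<close>
    and T0: "0 \<le> T0" "T0 < T"
    and D_meas: "D \<in> sets lebesgue"
    and D_sub: "D \<subseteq> closure \<Omega> \<times> {T0..T}"
    and \<rho>_meas: "(\<lambda>z. indicator D z * \<rho> z) \<in> borel_measurable lebesgue"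
    and \<rho>_bdd: "\<exists>M. AE z in lebesgue. z \<in> D \<longrightarrow> \<bar>\<rho> z\<bar> \<le> M"
    \<comment> \<open>(A.2)\<close>
    and \<delta>: "0 < \<delta>" "\<delta> < T - T0"
    and C: "0 < C1" "0 < C2" "0 \<le> p"
    and Ds: "AE s in lborel. s \<in> {0..\<delta>} \<longrightarrow>
               emeasure lebesgue {x. (x, T0 + s) \<in> D} \<ge> ennreal (C1 * s powr p)"
    and sign: "(AE z in lebesgue. z \<in> D \<and> snd z \<in> {T0..T0+\<delta>} \<longrightarrow> \<rho> z \<ge> C2)
             \<or> (AE z in lebesgue. z \<in> D \<and> snd z \<in> {T0..T0+\<delta>} \<longrightarrow> - \<rho> z \<ge> C2)"
    and \<omega>: "norm \<omega> = 1"
  shows "(\<forall>\<^sub>F \<tau> in at_top. heat_I \<Omega> \<nu> g0 g1 T \<omega> 0 \<tau> \<noteq> 0)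
       \<and> ((\<lambda>\<tau>. ln \<bar>heat_I \<Omega> \<nu> g0 g1 T \<omega> 0 \<tau>\<bar> / \<tau>) \<longlongrightarrow> - T0) at_top
       \<and> (\<forall>s. s < T0 \<longrightarrow> ((\<lambda>\<tau>. \<bar>heat_I \<Omega> \<nu> g0 g1 T \<omega> s \<tau>\<bar>) \<longlongrightarrow> 0) at_top)
       \<and> (\<forall>s. s > T0 \<longrightarrow> filterlim (\<lambda>\<tau>. \<bar>heat_I \<Omega> \<nu> g0 g1 T \<omega> s \<tau>\<bar>) at_top at_top)"
proof -
  have "open \<Omega>" "bounded \<Omega>"
    using dom by (auto simp: bounded_smooth_domain_def)
  then have H: "\<Omega> \<times> {0<..<T} \<in> lmeasurable"
    by (rule lmeasurable_Times_greaterThanLessThan)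
  obtain R where "R > 0" and R_norm: "\<And>x. x \<in> \<Omega> \<Longrightarrow> norm x \<le> R"
    using \<open>bounded \<Omega>\<close> by (auto simp: bounded_pos)
  have R: "\<bar>x \<bullet> \<omega>\<bar> \<le> R" if "x \<in> \<Omega>" for x
    using Cauchy_Schwarz_ineq2[of x \<omega>] R_norm[OF that] \<omega> by simp
  obtain M0 where "AE z in lebesgue. z \<in> D \<longrightarrow> \<bar>\<rho> z\<bar> \<le> M0"
    using \<rho>_bdd by blast
  then have \<rho>: "AE z in lebesgue. z \<in> D \<longrightarrow> \<bar>\<rho> z\<bar> \<le> max M0 0"
    by eventually_elim auto
  have D_T0: "D \<subseteq> UNIV \<times> {T0..}"
    using D_sub by auto
  define K where "K = max M0 0 * measure lebesgue (\<Omega> \<times> {0<..<T}) + (LINT x:\<Omega>|lebesgue. \<bar>u (x, T)\<bar>)"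
  have "\<forall>\<^sub>F \<tau> in at_top. heat_I \<Omega> \<nu> g0 g1 T \<omega> s \<tau> = exp (\<tau> * s) * heat_I_interior \<Omega> u T D \<rho> \<omega> \<tau>" for s
    using eventually_ge_at_top[of 0]
    by eventually_elim (rule heat_I_eq_heat_I_interior[OF heat[OF smooth_on_heat_v] _ \<omega>])
  moreover have "\<forall>\<^sub>F \<tau> in at_top. \<bar>heat_I_interior \<Omega> u T D \<rho> \<omega> \<tau>\<bar> \<le> K * exp (sqrt \<tau> * R - \<tau> * T0)"
    unfolding K_def using eventually_ge_at_top[of 0]
    by eventually_elim (rule abs_heat_I_interior_upper[OF H R D_T0 \<rho> uT_int max.cobounded2 _ less_imp_le[OF T0(2)]])
  moreover have "\<exists>c>0. \<forall>\<^sub>F \<tau> in at_top.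
      c * exp (- (sqrt \<tau> * R) - \<tau> * (T0 + \<eta>)) - K * exp (sqrt \<tau> * R - \<tau> * (T0 + \<delta>))
        \<le> \<bar>heat_I_interior \<Omega> u T D \<rho> \<omega> \<tau>\<bar>"
    if "0 < \<eta>" "\<eta> < \<delta>" for \<eta>
    unfolding K_def
  proof (rule eventually_abs_heat_I_interior_lower[OF \<open>open \<Omega>\<close> \<open>bounded \<Omega>\<close>
        frontier_null_if_bounded_smooth_domain[OF dom] R D_meas _ \<rho>_meas \<rho> sign _ uT_int max.cobounded2 C(2) T0(1) that])
    show "D \<subseteq> closure \<Omega> \<times> {T0..}" "T0 + \<delta> \<le> T"
      using D_sub \<delta>(2) by auto
    show "AE s in lborel. s \<in> {0<..\<eta>} \<longrightarrow> emeasure lebesgue {x. (x, T0 + s) \<in> D} \<noteq> 0"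
      using Ds by eventually_elim (use C that in auto)
  qed
  ultimately show ?thesis
    by (rule exponential_rate_limits[OF \<delta>(1) less_imp_le[OF \<open>R > 0\<close>]])
qed

end
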